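(* Let $D\colon \omega\to \omega^+$ be a function such that (i) $D$ is increasing (i.e., $m\le n$ implies $D(m)\le D(n)$), (ii) $D(0)=0$ or $D(0)=1$, and (iii) $D(2)>0$. Then there is a countably infinite total algebra $\mathbf{A}$ such that $d_{\mathbf{A}}(n)=D(n)$ for all $n\in\omega$.
   Context: $\omega=\{0,1,2,\dots\}$ and $\omega^+=\omega\cup\{\omega\}$, ordered naturally with $\omega$ largest. For an algebra $\mathbf{A}$ and $n\in\omega$, $d_{\mathbf{A}}(n)$ is the least size of a generating set of the direct power $\mathbf{A}^n$, with $d_{\mathbf{A}}(n)=\omega$ if $\mathbf{A}^n$ is not finitely generated ($\mathbf{A}^0$ is the one-element algebra). *)

theory Defs
  imports Main "HOL-Library.Extended_Nat"
begin

text \<open>An operation is a pair (arity k, function on argument lists); it is meant to be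
applied to lists of length k.\<close>

type_synonym 'a operation = "nat \<times> ('a list \<Rightarrow> 'a)"
type_synonym 'a algebra = "'a set \<times> 'a operation set"

definition total_algebra :: "'a algebra \<Rightarrow> bool" where
  "total_algebra Alg \<longleftrightarrow>
     (\<forall>(k, f) \<in> snd Alg. \<forall>xs. length xs = k \<and> set xs \<subseteq> fst Alg \<longrightarrow> f xs \<in> fst Alg)"

inductive_set Sg :: "'a operation set \<Rightarrow> 'a set \<Rightarrow> 'a set" for F X where
  gen: "x \<in> X \<Longrightarrow> x \<in> Sg F X"
| app: "(k, f) \<in> F \<Longrightarrow> length ys = k \<Longrightarrow> \<forall>y\<in>set ys. y \<in> Sg F X \<Longrightarrow> f ys \<in> Sg F X"

definition generates :: "'a algebra \<Rightarrow> 'a set \<Rightarrow> bool" where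
  "generates Alg X \<longleftrightarrow> X \<subseteq> fst Alg \<and> Sg (snd Alg) X = fst Alg"

text \<open>Direct power A^n: n-tuples (lists of length n) over the carrier, operations
applied coordinatewise. A^0 is the one-element algebra with carrier {[]}.\<close>
definition power_op :: "nat \<Rightarrow> 'a operation \<Rightarrow> 'a list operation" where
  "power_op n op = (fst op, \<lambda>ys. map (\<lambda>i. snd op (map (\<lambda>y. y ! i) ys)) [0..<n])"

definition direct_power :: "'a algebra \<Rightarrow> nat \<Rightarrow> 'a list algebra" where
  "direct_power Alg n =
     ({xs. length xs = n \<and> set xs \<subseteq> fst Alg}, power_op n ` snd Alg)"

definition gen_rank :: "'a algebra \<Rightarrow> enat" where
  "gen_rank Alg =
     (if \<exists>X. finite X \<and> generates Alg X
      then enat (LEAST m. \<exists>X. finite X \<and> card X = m \<and> generates Alg X)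
      else \<infinity>)"

definition d_fun :: "'a algebra \<Rightarrow> nat \<Rightarrow> enat" where
  "d_fun Alg n = gen_rank (direct_power Alg n)"

end

(* Split the positive integers into infinitely many disjoint infinite blocks of atoms
   atom j m (m = 0, 1, ...), and call an n-tuple j-level if it consists of n distinct atoms of
   block j.  The algebra has carrier nat and as operations all polymorphisms of the relations
   "not j-level" on n-tuples, for all n and all j < D n.

   If X generates A^n (n > 0) and card X < D n, then some level j <= card X contains no member
   of X, since a nonempty tuple has at most one level; the subuniverse generated by X then
   contains no j-level tuple, which is absurd.  Conversely, if D n = k > 0, the k columns
   (atom p 0, ..., atom p (n - 1)), p < k, generate A^n: a tuple a is the image of the k-ary
   operation sending the i-th row (atom 0 i, ..., atom (k - 1) i) to a ! i and everything else
   to 0.  That operation is a polymorphism, because a j-level image of n'-tuples forces the n'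
   coordinate slices of the arguments to be distinct rows, so n' <= n, hence j < D n' <= k,
   and the j-th argument is itself j-level.  The cases n = 0 and D n = 0 (which forces n = 1
   since D 2 > 0) are settled by nullary operations: there are such polymorphisms exactly when
   D 0 = 0, and every constant is one when D 1 = 0 as well. *)

theory Submission
  imports Defs "HOL-Library.Nat_Bijection"
begin

definition closed_under :: "'a operation \<Rightarrow> 'a set \<Rightarrow> bool" where
  "closed_under op S \<longleftrightarrow> (\<forall>ys. length ys = fst op \<longrightarrow> set ys \<subseteq> S \<longrightarrow> snd op ys \<in> S)"

lemma Sg_subset:
  assumes "X \<subseteq> S" and "\<And>op. op \<in> F \<Longrightarrow> closed_under op S"
  shows "Sg F X \<subseteq> S"
proof
  fix x assume "x \<in> Sg F X"
  then show "x \<in> S"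
  proof induction
    case (gen x)
    with assms(1) show ?case by blast
  next
    case (app k f ys)
    with assms(2)[of "(k, f)"] show ?case by (auto simp: closed_under_def)
  qed
qed

lemma Sg_power_subset_tuples:
  assumes "X \<subseteq> {xs. length xs = n}"
  shows "Sg (power_op n ` F) X \<subseteq> {xs. length xs = n}"
  by (rule Sg_subset) (use assms in \<open>auto simp: closed_under_def power_op_def\<close>)

lemma power_op_app_in_Sg:
  assumes "(k, f) \<in> F" and "length ys = k" and "set ys \<subseteq> Sg (power_op n ` F) X"
  shows "map (\<lambda>i. f (map (\<lambda>y. y ! i) ys)) [0..<n] \<in> Sg (power_op n ` F) X"
proof -
  have "power_op n (k, f) \<in> power_op n ` F" using assms(1) by blast
  then show ?thesis
    using Sg.app[of k _ "power_op n ` F" ys X] assms(2,3) by (auto simp: power_op_def)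
qed

lemma generates_direct_power_iff:
  "generates (direct_power (A, F) n) X \<longleftrightarrow>
     X \<subseteq> {xs. length xs = n \<and> set xs \<subseteq> A} \<and>
     Sg (power_op n ` F) X = {xs. length xs = n \<and> set xs \<subseteq> A}"
  by (simp add: generates_def direct_power_def)

lemma gen_rank_eqI:
  assumes lower: "\<And>X. finite X \<Longrightarrow> generates Alg X \<Longrightarrow> r \<le> enat (card X)"
    and upper: "\<And>k. r = enat k \<Longrightarrow> \<exists>X. finite X \<and> card X = k \<and> generates Alg X"
  shows "gen_rank Alg = r"
proof (cases r)
  case (enat k)
  then obtain X where X: "finite X" "card X = k" "generates Alg X" using upper by blast
  have "(LEAST m. \<exists>X. finite X \<and> card X = m \<and> generates Alg X) = k"
  proof (rule Least_equality)
    show "\<exists>X. finite X \<and> card X = k \<and> generates Alg X" using X by blast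
  next
    fix m assume "\<exists>X. finite X \<and> card X = m \<and> generates Alg X"
    then show "k \<le> m" using lower enat by fastforce
  qed
  with X enat show ?thesis by (auto simp: gen_rank_def)
next
  case infinity
  with lower show ?thesis by (force simp: gen_rank_def)
qed

lemma d_fun_zero: "d_fun (A, F) 0 = (if \<exists>f. (0, f) \<in> F then 0 else 1)"
proof -
  have carrier: "{xs. length xs = 0 \<and> set xs \<subseteq> A} = {[]}" by auto
  show ?thesis
  proof (cases "\<exists>f. (0, f) \<in> F")
    case True
    then obtain f where "(0, f) \<in> F" by blast
    from power_op_app_in_Sg[OF this, of "[]" 0 "{}"]
    have "[] \<in> Sg (power_op 0 ` F) {}" by simp
    with Sg_power_subset_tuples[of "{}" 0 F] have "generates (direct_power (A, F) 0) {}"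
      unfolding generates_direct_power_iff carrier by auto
    with True show ?thesis
      unfolding d_fun_def by (intro gen_rank_eqI) (auto simp: zero_enat_def)
  next
    case False
    then have "Sg (power_op 0 ` F) {} \<subseteq> {}"
      by (intro Sg_subset) (auto simp: closed_under_def power_op_def)
    then have lower: "1 \<le> enat (card X)" if "finite X" "generates (direct_power (A, F) 0) X" for X
      using that unfolding generates_direct_power_iff carrier
      by (cases "X = {}") (auto simp: one_enat_def Suc_le_eq)
    have "Sg (power_op 0 ` F) {[]} = {[]}"
      using Sg.gen[of "[]" "{[]}"] Sg_power_subset_tuples[of "{[]}" 0 F] by auto
    then have "generates (direct_power (A, F) 0) {[]}"
      unfolding generates_direct_power_iff carrier by simp
    with False lower show ?thesis
      unfolding d_fun_def by (intro gen_rank_eqI) (auto simp: one_enat_def intro!: exI[of _ "{[]}"])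
  qed
qed

definition atom :: "nat \<Rightarrow> nat \<Rightarrow> nat" where
  "atom j m = Suc (prod_encode (j, m))"

lemma atom_eq_iff [simp]: "atom j m = atom j' m' \<longleftrightarrow> j = j' \<and> m = m'"
  by (auto simp: atom_def)

lemma atom_neq_zero [simp]: "atom j m \<noteq> 0"
  by (simp add: atom_def)

definition level_tuple :: "nat \<Rightarrow> nat list \<Rightarrow> bool" where
  "level_tuple j t \<longleftrightarrow> distinct t \<and> set t \<subseteq> range (atom j)"

lemma level_tuple_Nil [simp]: "level_tuple j []"
  by (simp add: level_tuple_def)

lemma level_tuple_map_atom:
  "inj_on g {..<n} \<Longrightarrow> level_tuple j (map (\<lambda>i. atom j (g i)) [0..<n])"
  by (auto simp: level_tuple_def distinct_map inj_on_def)

lemma level_tuple_unique: "level_tuple i t \<Longrightarrow> level_tuple j t \<Longrightarrow> t \<noteq> [] \<Longrightarrow> i = j"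
  by (cases t) (auto simp: level_tuple_def)

lemma exists_level_avoiding:
  assumes "finite X" and "[] \<notin> X"
  shows "\<exists>j \<le> card X. \<forall>x\<in>X. \<not> level_tuple j x"
proof -
  define levels where "levels = {j. \<exists>x\<in>X. level_tuple j x}"
  have levels_image: "levels \<subseteq> (\<lambda>x. THE j. level_tuple j x) ` X"
  proof
    fix j assume "j \<in> levels"
    then obtain x where "x \<in> X" "level_tuple j x" by (auto simp: levels_def)
    moreover from this assms(2) have "(THE j. level_tuple j x) = j"
      using level_tuple_unique by blast
    ultimately show "j \<in> (\<lambda>x. THE j. level_tuple j x) ` X" by force
  qed
  have "finite levels"
    using levels_image assms(1) by (rule finite_subset[OF _ finite_imageI])
  have "card levels \<le> card ((\<lambda>x. THE j. level_tuple j x) ` X)"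
    using levels_image assms(1) by (intro card_mono) simp_all
  also have "\<dots> \<le> card X"
    using assms(1) by (rule card_image_le)
  finally have "\<not> {..card X} \<subseteq> levels"
    using card_mono[OF \<open>finite levels\<close>, of "{..card X}"] by auto
  then show ?thesis by (auto simp: levels_def)
qed

definition level_ops :: "(nat \<Rightarrow> enat) \<Rightarrow> nat operation set" where
  "level_ops D = {op. \<forall>n j. enat j < D n \<longrightarrow>
     closed_under (power_op n op) {t. length t = n \<and> \<not> level_tuple j t}}"

lemma mem_level_ops_iff:
  "(k, f) \<in> level_ops D \<longleftrightarrow>
     (\<forall>n j ys. enat j < D n \<longrightarrow> length ys = k \<longrightarrow> (\<forall>y\<in>set ys. length y = n) \<longrightarrow>
        level_tuple j (map (\<lambda>i. f (map (\<lambda>y. y ! i) ys)) [0..<n]) \<longrightarrow> (\<exists>y\<in>set ys. level_tuple j y))"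
  unfolding level_ops_def closed_under_def power_op_def by (auto simp: subset_iff) blast

lemma nullary_level_ops_iff: "(\<exists>f. (0, f) \<in> level_ops D) \<longleftrightarrow> D 0 = 0"
proof
  assume "\<exists>f. (0, f) \<in> level_ops D"
  then obtain f where "(0, f) \<in> level_ops D" by blast
  then have "\<not> enat 0 < D 0"
    unfolding mem_level_ops_iff by (elim allE[of _ 0] allE[of _ 0] allE[of _ "[]"]) simp
  then show "D 0 = 0" by (simp add: zero_enat_def [symmetric])
next
  assume "D 0 = 0"
  show "\<exists>f. (0, f) \<in> level_ops D"
  proof (intro exI[of _ "\<lambda>_. 0"], unfold mem_level_ops_iff, intro allI impI)
    fix n j and ys :: "nat list list"
    assume "enat j < D n" and "level_tuple j (map (\<lambda>i. 0) [0..<n])"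
    with \<open>D 0 = 0\<close> show "\<exists>y\<in>set ys. level_tuple j y"
      by (cases n) (auto simp: level_tuple_def)
  qed
qed

lemma const_in_level_ops:
  assumes "D 0 = 0" and "D 1 = 0"
  shows "(0, \<lambda>_. c) \<in> level_ops D"
  unfolding mem_level_ops_iff
proof (intro allI impI)
  fix n j and ys :: "nat list list"
  assume j: "enat j < D n" and level: "level_tuple j (map (\<lambda>i. c) [0..<n])"
  consider "n = 0" | "n = 1" | m where "n = Suc (Suc m)"
    by (metis One_nat_def not0_implies_Suc)
  then show "\<exists>y\<in>set ys. level_tuple j y"
  proof cases
    case 3
    with level show ?thesis by (simp add: upt_conv_Cons level_tuple_def)
  qed (use j assms in auto)
qed

lemma generates_level_ops_card_ge:
  assumes "0 < n" and "finite X" and "generates (direct_power (UNIV, level_ops D) n) X"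
  shows "D n \<le> enat (card X)"
proof (rule ccontr)
  assume "\<not> D n \<le> enat (card X)"
  then have small: "enat (card X) < D n" by simp
  from assms(3) have X: "X \<subseteq> {xs. length xs = n}"
    and Sg: "Sg (power_op n ` level_ops D) X = {xs. length xs = n}"
    by (simp_all add: generates_direct_power_iff)
  from X assms(1) have "[] \<notin> X" by auto
  with assms(2) obtain j where "j \<le> card X" and avoid: "\<forall>x\<in>X. \<not> level_tuple j x"
    using exists_level_avoiding by blast
  with small have "enat j < D n" by (meson enat_ord_simps(1) le_less_trans)
  then have "Sg (power_op n ` level_ops D) X \<subseteq> {t. length t = n \<and> \<not> level_tuple j t}"
    using X avoid by (intro Sg_subset) (auto simp: level_ops_def)
  moreover have "level_tuple j (map (atom j) [0..<n])"
    using level_tuple_map_atom[of id n j] by simp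
  ultimately have "map (atom j) [0..<n] \<notin> Sg (power_op n ` level_ops D) X" by blast
  with Sg show False by simp
qed

definition atom_row :: "nat \<Rightarrow> nat \<Rightarrow> nat list" where
  "atom_row k i = map (\<lambda>p. atom p i) [0..<k]"

definition atom_column :: "nat \<Rightarrow> nat \<Rightarrow> nat list" where
  "atom_column n p = map (atom p) [0..<n]"

lemma atom_row_inj:
  assumes "0 < k" and "atom_row k i = atom_row k i'"
  shows "i = i'"
proof -
  from assms(2) have "atom_row k i ! 0 = atom_row k i' ! 0" by simp
  with assms(1) show ?thesis by (simp add: atom_row_def)
qed

lemma inj_on_atom_column:
  assumes "0 < n"
  shows "inj_on (atom_column n) A"
proof (rule inj_onI)
  fix p p' assume "atom_column n p = atom_column n p'"
  then have "atom_column n p ! 0 = atom_column n p' ! 0" by simp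
  with assms show "p = p'" by (simp add: atom_column_def)
qed

definition interpolation :: "nat \<Rightarrow> nat list \<Rightarrow> nat list \<Rightarrow> nat" where
  "interpolation k a xs =
     (if \<exists>i<length a. xs = atom_row k i then a ! (THE i. i < length a \<and> xs = atom_row k i) else 0)"

lemma interpolation_atom_row:
  assumes "0 < k" and "i < length a"
  shows "interpolation k a (atom_row k i) = a ! i"
proof -
  have "(THE i'. i' < length a \<and> atom_row k i = atom_row k i') = i"
    using assms atom_row_inj by (intro the_equality) auto
  with assms(2) show ?thesis by (auto simp: interpolation_def)
qed

lemma interpolation_nonzero:
  "interpolation k a xs \<noteq> 0 \<Longrightarrow> \<exists>i<length a. xs = atom_row k i"
  by (auto simp: interpolation_def split: if_splits)

lemma interpolation_in_level_ops:
  assumes "mono D" and "D (length a) = enat k"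
  shows "(k, interpolation k a) \<in> level_ops D"
  unfolding mem_level_ops_iff
proof (intro allI impI)
  fix n j and ys :: "nat list list"
  define slice where "slice i = map (\<lambda>y. y ! i) ys" for i
  assume j: "enat j < D n" and len: "length ys = k" "\<forall>y\<in>set ys. length y = n"
    and "level_tuple j (map (\<lambda>i. interpolation k a (map (\<lambda>y. y ! i) ys)) [0..<n])"
  then have level: "level_tuple j (map (\<lambda>i. interpolation k a (slice i)) [0..<n])"
    by (simp add: slice_def)
  have "\<forall>i\<in>{..<n}. \<exists>r<length a. slice i = atom_row k r"
  proof
    fix i assume "i \<in> {..<n}"
    with level have "interpolation k a (slice i) \<in> range (atom j)"
      by (auto simp: level_tuple_def)
    then have "interpolation k a (slice i) \<noteq> 0" by (metis atom_neq_zero rangeE)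
    then show "\<exists>r<length a. slice i = atom_row k r" by (rule interpolation_nonzero)
  qed
  from bchoice[OF this] obtain \<sigma> where \<sigma>: "\<forall>i\<in>{..<n}. \<sigma> i < length a \<and> slice i = atom_row k (\<sigma> i)"
    by blast
  have inj_slices: "inj_on (\<lambda>i. interpolation k a (slice i)) {..<n}"
    using level by (simp add: level_tuple_def distinct_map lessThan_atLeast0)
  have inj: "inj_on \<sigma> {..<n}"
  proof (rule inj_onI)
    fix i i' assume i: "i \<in> {..<n}" "i' \<in> {..<n}" and "\<sigma> i = \<sigma> i'"
    with \<sigma> have "interpolation k a (slice i) = interpolation k a (slice i')" by metis
    with inj_slices i show "i = i'" by (auto dest: inj_onD)
  qed
  moreover have "\<sigma> ` {..<n} \<subseteq> {..<length a}" using \<sigma> by auto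
  ultimately have "n \<le> length a"
    using card_inj_on_le[of \<sigma> "{..<n}" "{..<length a}"] by simp
  with assms have "D n \<le> enat k" by (metis monoD)
  with j have "enat j < enat k" by (rule order_less_le_trans)
  then have "j < k" by simp
  have "ys ! j = map (\<lambda>i. atom j (\<sigma> i)) [0..<n]"
  proof (rule nth_equalityI)
    show "length (ys ! j) = length (map (\<lambda>i. atom j (\<sigma> i)) [0..<n])"
      using len \<open>j < k\<close> by simp
  next
    fix i assume "i < length (ys ! j)"
    with len \<open>j < k\<close> have i: "i < n" by simp
    have "ys ! j ! i = slice i ! j" using len \<open>j < k\<close> by (simp add: slice_def)
    also have "\<dots> = atom j (\<sigma> i)" using \<sigma> i \<open>j < k\<close> by (simp add: atom_row_def)
    finally show "ys ! j ! i = map (\<lambda>i. atom j (\<sigma> i)) [0..<n] ! i" using i by simp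
  qed
  with level_tuple_map_atom[OF inj] \<open>j < k\<close> len(1) show "\<exists>y\<in>set ys. level_tuple j y"
    by (metis nth_mem)
qed

lemma atom_columns_generate:
  assumes "mono D" and "D n = enat k" and "0 < k"
  shows "Sg (power_op n ` level_ops D) (atom_column n ` {..<k}) = {t. length t = n}"
proof
  show "{t. length t = n} \<subseteq> Sg (power_op n ` level_ops D) (atom_column n ` {..<k})"
  proof
    fix a :: "nat list" assume "a \<in> {t. length t = n}"
    then have a: "length a = n" by simp
    define ys where "ys = map (atom_column n) [0..<k]"
    have "set ys \<subseteq> Sg (power_op n ` level_ops D) (atom_column n ` {..<k})"
      by (auto simp: ys_def intro: Sg.gen)
    from power_op_app_in_Sg[OF interpolation_in_level_ops[of D a k] _ this] assms(1,2) a
    have "map (\<lambda>i. interpolation k a (map (\<lambda>y. y ! i) ys)) [0..<n]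
            \<in> Sg (power_op n ` level_ops D) (atom_column n ` {..<k})"
      by (simp add: ys_def)
    moreover have "map (\<lambda>i. interpolation k a (map (\<lambda>y. y ! i) ys)) [0..<n] = a"
    proof (rule nth_equalityI)
      fix i assume "i < length (map (\<lambda>i. interpolation k a (map (\<lambda>y. y ! i) ys)) [0..<n])"
      then have "i < n" by simp
      then have "map (\<lambda>y. y ! i) ys = atom_row k i"
        by (simp add: ys_def atom_row_def atom_column_def)
      with \<open>i < n\<close> a show "map (\<lambda>i. interpolation k a (map (\<lambda>y. y ! i) ys)) [0..<n] ! i = a ! i"
        by (simp add: interpolation_atom_row[OF assms(3)])
    qed (simp add: a)
    ultimately show "a \<in> Sg (power_op n ` level_ops D) (atom_column n ` {..<k})" by simp
  qed
qed (rule Sg_power_subset_tuples, auto simp: atom_column_def)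

lemma constants_generate:
  assumes "D 0 = 0" and "D 1 = 0"
  shows "Sg (power_op 1 ` level_ops D) {} = {t. length t = 1}"
proof
  show "{t. length t = 1} \<subseteq> Sg (power_op 1 ` level_ops D) {}"
  proof
    fix t :: "nat list" assume "t \<in> {t. length t = 1}"
    then obtain c where "t = [c]" by (auto simp: length_Suc_conv)
    with power_op_app_in_Sg[OF const_in_level_ops[OF assms, of c], of "[]" 1 "{}"]
    show "t \<in> Sg (power_op 1 ` level_ops D) {}" by simp
  qed
qed (rule Sg_power_subset_tuples, simp)

lemma d_fun_level_ops:
  assumes "mono D" and "0 < D 2" and "0 < n"
  shows "d_fun (UNIV, level_ops D) n = D n"
  unfolding d_fun_def
proof (rule gen_rank_eqI)
  fix X assume "finite X" and "generates (direct_power (UNIV, level_ops D) n) X"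
  with assms(3) show "D n \<le> enat (card X)" by (rule generates_level_ops_card_ge)
next
  fix k assume Dn: "D n = enat k"
  show "\<exists>X. finite X \<and> card X = k \<and> generates (direct_power (UNIV, level_ops D) n) X"
  proof (cases "k = 0")
    case True
    have "n = 1"
    proof (rule ccontr)
      assume "n \<noteq> 1"
      with assms(3) have "2 \<le> n" by simp
      with assms(1) have "D 2 \<le> D n" by (rule monoD)
      with assms(2) Dn True show False by (simp add: zero_enat_def)
    qed
    with Dn True have "D 1 = 0" by (simp add: zero_enat_def)
    moreover from this have "D 0 = 0" using monoD[OF assms(1), of 0 1] by simp
    ultimately have "Sg (power_op n ` level_ops D) {} = {t. length t = n}"
      using constants_generate \<open>n = 1\<close> by simp
    with True show ?thesis
      unfolding generates_direct_power_iff by (intro exI[of _ "{}"]) simp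
  next
    case False
    have "card (atom_column n ` {..<k}) = k"
      using inj_on_atom_column[OF assms(3)] by (simp add: card_image)
    moreover have "atom_column n ` {..<k} \<subseteq> {t. length t = n}"
      by (auto simp: atom_column_def)
    ultimately show ?thesis
      using atom_columns_generate[OF assms(1) Dn] False
      unfolding generates_direct_power_iff by (intro exI[of _ "atom_column n ` {..<k}"]) simp
  qed
qed

theorem theorem3p4:
  fixes D :: "nat \<Rightarrow> enat"
  assumes "\<And>m n. m \<le> n \<Longrightarrow> D m \<le> D n"
    and "D 0 = 0 \<or> D 0 = 1"
    and "D 2 > 0"
  shows "\<exists>(A :: nat set) F. infinite A \<and> total_algebra (A, F) \<and>
           (\<forall>n. d_fun (A, F) n = D n)"
proof -
  have "mono D" using assms(1) by (rule monoI)
  have "d_fun (UNIV, level_ops D) n = D n" for n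
  proof (cases "n = 0")
    case True
    have "d_fun (UNIV, level_ops D) 0 = (if D 0 = 0 then 0 else 1)"
      by (simp add: d_fun_zero nullary_level_ops_iff)
    with assms(2) True show ?thesis by auto
  next
    case False
    with \<open>mono D\<close> assms(3) show ?thesis by (simp add: d_fun_level_ops)
  qed
  moreover have "total_algebra (UNIV, level_ops D)" by (simp add: total_algebra_def)
  ultimately show ?thesis by (intro exI[of _ UNIV] exI[of _ "level_ops D"]) simp
qed

end
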